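(* Let $\Bbbk$ be an algebraically closed field of characteristic $0$ and let $G \simeq C_m \times C_{lm}$ (with $m, l$ positive integers) be a finite abelian subgroup of $\mathrm{SL}_3(\Bbbk)$, where the embedding is given by the representation $\rho = \chi_1 \oplus \chi_2 \oplus \chi_3$ with $\chi_1,\chi_2,\chi_3$ one-dimensional characters of $G$. Suppose that no $\chi_i$ is the trivial character and that $|G| > 4$. Then there exists a direct product decomposition $G = H \times K$ with $H$ cyclic such that none of the restrictions $\chi_i|_H$ ($i=1,2,3$) is trivial.
   Context: $C_r$ denotes the cyclic group of order $r$. *)

theory Defs
  imports "HOL-Algebra.Algebra" "HOL-Computational_Algebra.Polynomial"
begin

definition alg_closed_type :: "'k::field itself \<Rightarrow> bool" where
  "alg_closed_type _ \<longleftrightarrow> (\<forall>p::'k poly. degree p > 0 \<longrightarrow> (\<exists>x. poly p x = 0))"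

definition character :: "('g, 'b) monoid_scheme \<Rightarrow> ('g \<Rightarrow> 'k::field) \<Rightarrow> bool" where
  "character G \<chi> \<longleftrightarrow> (\<forall>x\<in>carrier G. \<chi> x \<noteq> 0) \<and>
     (\<forall>x\<in>carrier G. \<forall>y\<in>carrier G. \<chi> (x \<otimes>\<^bsub>G\<^esub> y) = \<chi> x * \<chi> y)"

definition trivial_on :: "('g \<Rightarrow> 'k::field) \<Rightarrow> 'g set \<Rightarrow> bool" where
  "trivial_on \<chi> H \<longleftrightarrow> (\<forall>h\<in>H. \<chi> h = 1)"

end

theory Submission
  imports Defs
begin

(* Write G as the internal direct product of cyclic subgroups generated by g1 and g2 with
   ord g1 dividing ord g2. Then for every a the element g1^a g2 generates a cyclic complement
   of the subgroup generated by g1, and g1 itself generates a cyclic complement of the one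
   generated by g2; so it suffices to find such an element outside all three kernels.
   If this fails for g1 and for g2, some chi_i is trivial at g2 and some other chi_j is trivial
   at g1. With A = chi_i g1 and B = chi_j g2 the three characters take the values A^a, B and
   1/(A^a B) at g1^a g2, and a = 1 or a = 2 works unless A^2 = B^2 = 1. In that case g1^2 and
   g2^2 lie in the kernels of chi_i and chi_j, hence of all three characters since the
   determinant is 1, so faithfulness gives g1^2 = g2^2 = 1 and |G| <= 4. *)

lemma DirProd_nat_pow:
  "(a, b) [^]\<^bsub>G \<times>\<times> H\<^esub> (k::nat) = (a [^]\<^bsub>G\<^esub> k, b [^]\<^bsub>H\<^esub> k)"
  by (induction k) simp_all

lemma DirProd_int_pow:
  assumes "group G" "group H" "a \<in> carrier G" "b \<in> carrier H"
  shows "(a, b) [^]\<^bsub>G \<times>\<times> H\<^esub> (k::int) = (a [^]\<^bsub>G\<^esub> k, b [^]\<^bsub>H\<^esub> k)"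
proof -
  have "inv\<^bsub>G \<times>\<times> H\<^esub> (a [^]\<^bsub>G\<^esub> n, b [^]\<^bsub>H\<^esub> n) = (inv\<^bsub>G\<^esub> (a [^]\<^bsub>G\<^esub> n), inv\<^bsub>H\<^esub> (b [^]\<^bsub>H\<^esub> n))"
    for n :: nat
    using assms by (intro inv_DirProd) (auto intro: monoid.nat_pow_closed group.is_monoid)
  then show ?thesis
    by (simp only: int_pow_def2 DirProd_nat_pow split: if_split) simp
qed

context group begin

lemma generate_Int_generate_trivial:
  assumes p: "p \<in> carrier G" and q: "q \<in> carrier G"
    and indep: "\<And>(i::int) (j::int). p [^] i \<otimes> q [^] j = \<one> \<Longrightarrow> p [^] i = \<one>"
  shows "generate G {p} \<inter> generate G {q} = {\<one>}"
proof -
  have "z = \<one>" if zp: "z \<in> generate G {p}" and zq: "z \<in> generate G {q}" for z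
  proof -
    obtain i :: int where zi: "z = p [^] i"
      using zp unfolding generate_pow[OF p] by blast
    obtain j :: int where zj: "z = q [^] j"
      using zq unfolding generate_pow[OF q] by blast
    have "p [^] i \<otimes> q [^] (- j) = \<one>"
      using q by (simp add: zi [symmetric] zj int_pow_neg)
    then show ?thesis using indep zi by blast
  qed
  then show ?thesis using generate.one by blast
qed

lemma generate_set_mult_generate_eq_carrier_iff:
  assumes p: "p \<in> carrier G" and q: "q \<in> carrier G"
  shows "generate G {p} <#> generate G {q} = carrier G
    \<longleftrightarrow> (\<forall>g\<in>carrier G. \<exists>(i::int) (j::int). g = p [^] i \<otimes> q [^] j)"
proof -
  have "generate G {p} <#> generate G {q} = {p [^] i \<otimes> q [^] j | (i::int) (j::int). True}"
    using generate_pow[OF p] generate_pow[OF q] by (auto simp: set_mult_def)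
  moreover have "{p [^] i \<otimes> q [^] j | (i::int) (j::int). True} \<subseteq> carrier G"
    using p q by auto
  ultimately show ?thesis by blast
qed

lemma cyclic_group_generate:
  assumes "h \<in> carrier G"
  shows "cyclic_group (subgroup_generated G (generate G {h}))"
proof -
  have "generate G (carrier G \<inter> generate G {h}) = generate G {h}"
    using assms generate_is_subgroup[of "{h}"] subgroup.carrier_subgroup_generated_subgroup
    by (simp only: carrier_subgroup_generated [symmetric]) blast
  moreover have "generate G (carrier G \<inter> {h}) = generate G {h}"
    using assms by simp
  ultimately have "subgroup_generated G (generate G {h}) = subgroup_generated G {h}"
    by (simp add: subgroup_generated_def)
  then show ?thesis by (simp add: cyclic_group_generated)
qed

end

lemma (in comm_group) generate_twisted_complement:
  assumes p: "p \<in> carrier G" and q: "q \<in> carrier G"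
    and disjoint: "generate G {p} \<inter> generate G {q} = {\<one>}"
    and span: "generate G {p} <#> generate G {q} = carrier G"
    and ord_dvd: "ord p dvd ord q"
  fixes a :: int
  shows "generate G {p [^] a \<otimes> q} \<inter> generate G {p} = {\<one>}"
    and "generate G {p [^] a \<otimes> q} <#> generate G {p} = carrier G"
proof -
  define h where "h = p [^] a \<otimes> q"
  have h: "h \<in> carrier G" using p q by (simp add: h_def)
  have h_pow: "h [^] i = p [^] (a * i) \<otimes> q [^] i" for i :: int
    using p q by (simp add: h_def int_pow_distrib int_pow_pow)
  show "generate G {h} \<inter> generate G {p} = {\<one>}"
  proof (rule generate_Int_generate_trivial[OF h p])
    fix i j :: int
    assume "h [^] i \<otimes> p [^] j = \<one>"
    then have "q [^] i \<otimes> p [^] (a * i + j) = \<one>"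
      using p q by (simp add: h_pow int_pow_mult m_ac)
    then have "q [^] i = p [^] (- (a * i + j))"
      using p q by (metis inv_equality int_pow_closed int_pow_neg)
    then have "q [^] i \<in> generate G {p} \<inter> generate G {q}"
      using generate_pow[OF p] generate_pow[OF q] by blast
    then have "q [^] i = \<one>" using disjoint by blast
    then have "p [^] i = \<one>"
      using p q ord_dvd int_pow_eq_id by (meson dvd_trans of_nat_dvd_iff)
    then show "h [^] i = \<one>"
      using p q by (simp add: h_pow \<open>q [^] i = \<one>\<close> mult.commute[of a] int_pow_pow [symmetric])
  qed
  show "generate G {h} <#> generate G {p} = carrier G"
    unfolding generate_set_mult_generate_eq_carrier_iff[OF h p]
  proof
    fix g assume "g \<in> carrier G"
    then obtain i j :: int where g: "g = p [^] i \<otimes> q [^] j"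
      using span generate_set_mult_generate_eq_carrier_iff[OF p q] by blast
    have "g = h [^] j \<otimes> p [^] (i - a * j)"
      using p q by (simp add: g h_pow int_pow_diff m_ac)
    then show "\<exists>(k::int) (l::int). g = h [^] k \<otimes> p [^] l" by blast
  qed
qed

lemma (in group) hom_DirProd_integer_mod_group_coordinates:
  assumes "\<psi> \<in> hom (integer_mod_group m \<times>\<times> integer_mod_group n) G"
  shows "\<psi> (i mod int m, j mod int n) = \<psi> (1 mod int m, 0) [^] i \<otimes> \<psi> (0, 1 mod int n) [^] j"
proof -
  let ?Z = "integer_mod_group m \<times>\<times> integer_mod_group n"
  interpret \<psi>: group_hom ?Z G \<psi>
    using assms by (simp add: group_hom_def group_hom_axioms_def DirProd_group)
  define u v where "u = (1 mod int m, 0::int)" and "v = (0::int, 1 mod int n)"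
  have u: "u \<in> carrier ?Z" and v: "v \<in> carrier ?Z"
    by (simp_all add: u_def v_def carrier_integer_mod_group)
  have "(i mod int m, j mod int n) = u [^]\<^bsub>?Z\<^esub> i \<otimes>\<^bsub>?Z\<^esub> v [^]\<^bsub>?Z\<^esub> j"
    using u v by (simp add: u_def v_def DirProd_int_pow int_pow_integer_mod_group mod_mult_right_eq)
  then show ?thesis
    using u v by (simp add: u_def [symmetric] v_def [symmetric] \<psi>.hom_int_pow del: carrier_DirProd)
qed

lemma (in group) iso_DirProd_integer_mod_group_generators:
  assumes "G \<cong> integer_mod_group m \<times>\<times> integer_mod_group n"
  obtains g1 g2 where "g1 \<in> carrier G" "g2 \<in> carrier G" "ord g1 = m" "ord g2 = n"
    "generate G {g1} \<inter> generate G {g2} = {\<one>}" "generate G {g1} <#> generate G {g2} = carrier G"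
proof -
  let ?Z = "integer_mod_group m \<times>\<times> integer_mod_group n"
  obtain \<phi> where "\<phi> \<in> iso G ?Z"
    using assms by (auto simp: is_iso_def)
  then have "inv_into (carrier G) \<phi> \<in> iso ?Z G"
    by (rule iso_set_sym)
  then obtain \<psi> where hom: "\<psi> \<in> hom ?Z G" and bij: "bij_betw \<psi> (carrier ?Z) (carrier G)"
    by (auto simp: iso_def)
  define g1 g2 where "g1 = \<psi> (1 mod int m, 0)" and "g2 = \<psi> (0, 1 mod int n)"
  have in_Z: "(i mod int m, j mod int n) \<in> carrier ?Z" for i j
    by (simp add: carrier_integer_mod_group)
  have g1: "g1 \<in> carrier G" and g2: "g2 \<in> carrier G"
    using in_Z[of 1 0] in_Z[of 0 1] bij by (auto simp: g1_def g2_def bij_betw_def)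
  note coordinates = hom_DirProd_integer_mod_group_coordinates[OF hom, folded g1_def g2_def]
  have trivial_iff: "g1 [^] i \<otimes> g2 [^] j = \<one> \<longleftrightarrow> int m dvd i \<and> int n dvd j" for i j :: int
  proof -
    have "\<one> = \<psi> (0 mod int m, 0 mod int n)"
      using hom_one[OF hom] by (simp add: DirProd_group)
    then have "g1 [^] i \<otimes> g2 [^] j = \<one> \<longleftrightarrow> (i mod int m, j mod int n) = (0 mod int m, 0 mod int n)"
      using coordinates bij_betw_imp_inj_on[OF bij] in_Z by (metis inj_on_eq_iff)
    then show ?thesis by (simp add: dvd_eq_mod_eq_0)
  qed
  have g1_pow: "g1 [^] i = \<one> \<longleftrightarrow> int m dvd i" and g2_pow: "g2 [^] i = \<one> \<longleftrightarrow> int n dvd i"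
    for i :: int
    using trivial_iff[of i 0] trivial_iff[of 0 i] g1 g2 by simp_all
  have "ord g1 = m" "ord g2 = n"
    using g1_pow g2_pow int_pow_eq_id[OF g1] int_pow_eq_id[OF g2]
    by (metis dvd_antisym dvd_refl of_nat_dvd_iff)+
  moreover have "generate G {g1} \<inter> generate G {g2} = {\<one>}"
    using generate_Int_generate_trivial[OF g1 g2] trivial_iff g1_pow by blast
  moreover have "generate G {g1} <#> generate G {g2} = carrier G"
    unfolding generate_set_mult_generate_eq_carrier_iff[OF g1 g2]
  proof
    fix g assume "g \<in> carrier G"
    then obtain i j where "(i, j) \<in> carrier ?Z" "g = \<psi> (i, j)"
      using bij by (metis bij_betw_imp_surj_on imageE prod.collapse)
    then have "g = \<psi> (i mod int m, j mod int n)"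
      by (auto simp: carrier_integer_mod_group split: if_splits)
    then show "\<exists>(i::int) (j::int). g = g1 [^] i \<otimes> g2 [^] j"
      using coordinates by blast
  qed
  ultimately show ?thesis using that g1 g2 by blast
qed

context monoid begin

lemma character_one:
  assumes "character G \<chi>"
  shows "\<chi> \<one> = 1"
proof -
  have "\<chi> (\<one> \<otimes> \<one>) = \<chi> \<one> * \<chi> \<one>" "\<chi> \<one> \<noteq> 0"
    using assms unfolding character_def by blast+
  then show ?thesis by simp
qed

lemma character_nat_pow:
  assumes "character G \<chi>" "g \<in> carrier G"
  shows "\<chi> (g [^] (n::nat)) = \<chi> g ^ n"
  using assms by (induction n) (simp_all add: character_one character_def)

end

lemma (in group) subgroup_character_kernel:
  assumes "character G \<chi>"
  shows "subgroup {g \<in> carrier G. \<chi> g = 1} G"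
proof (rule subgroupI)
  have mult: "\<chi> (g \<otimes> h) = \<chi> g * \<chi> h" if "g \<in> carrier G" "h \<in> carrier G" for g h
    using assms that by (simp add: character_def)
  show "{g \<in> carrier G. \<chi> g = 1} \<noteq> {}"
    using character_one[OF assms] by blast
  show "inv g \<in> {g \<in> carrier G. \<chi> g = 1}" if "g \<in> {g \<in> carrier G. \<chi> g = 1}" for g
    using that mult[of "inv g" g] character_one[OF assms] by simp
  show "g \<otimes> h \<in> {g \<in> carrier G. \<chi> g = 1}"
    if "g \<in> {g \<in> carrier G. \<chi> g = 1}" "h \<in> {g \<in> carrier G. \<chi> g = 1}" for g h
    using that mult by simp
qed auto

lemma (in group) trivial_on_set_mult_generate:
  assumes \<chi>: "character G \<chi>" and p: "p \<in> carrier G" and q: "q \<in> carrier G"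
    and "\<chi> p = 1" "\<chi> q = 1"
  shows "trivial_on \<chi> (generate G {p} <#> generate G {q})"
proof -
  let ?K = "{g \<in> carrier G. \<chi> g = 1}"
  have "generate G {g} \<subseteq> ?K" if "g \<in> carrier G" "\<chi> g = 1" for g
    using that subgroup_character_kernel[OF \<chi>] by (intro generate_subgroup_incl) auto
  then have "generate G {p} \<subseteq> ?K" "generate G {q} \<subseteq> ?K"
    using assms(2-5) by simp_all
  then have "generate G {p} <#> generate G {q} \<subseteq> ?K"
    using subgroup.m_closed[OF subgroup_character_kernel[OF \<chi>]] unfolding set_mult_def by blast
  then show ?thesis by (auto simp: trivial_on_def)
qed

definition faithful_diagonal_SL3 ::
    "('g, 'b) monoid_scheme \<Rightarrow> ('g \<Rightarrow> 'k::field) \<Rightarrow> ('g \<Rightarrow> 'k) \<Rightarrow> ('g \<Rightarrow> 'k) \<Rightarrow> bool" where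
  "faithful_diagonal_SL3 G \<chi>1 \<chi>2 \<chi>3 \<longleftrightarrow>
     character G \<chi>1 \<and> character G \<chi>2 \<and> character G \<chi>3 \<and>
     (\<forall>g\<in>carrier G. \<chi>1 g = 1 \<and> \<chi>2 g = 1 \<and> \<chi>3 g = 1 \<longrightarrow> g = \<one>\<^bsub>G\<^esub>) \<and>
     (\<forall>g\<in>carrier G. \<chi>1 g * \<chi>2 g * \<chi>3 g = 1)"

lemma faithful_diagonal_SL3_swap:
  "faithful_diagonal_SL3 G \<chi>1 \<chi>2 \<chi>3 \<Longrightarrow> faithful_diagonal_SL3 G \<chi>2 \<chi>1 \<chi>3"
  by (auto simp: faithful_diagonal_SL3_def mult.commute)

lemma faithful_diagonal_SL3_rotate:
  "faithful_diagonal_SL3 G \<chi>1 \<chi>2 \<chi>3 \<Longrightarrow> faithful_diagonal_SL3 G \<chi>2 \<chi>3 \<chi>1"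
  by (auto simp: faithful_diagonal_SL3_def ac_simps)

lemma faithful_diagonal_SL3_kernel:
  assumes "faithful_diagonal_SL3 G \<chi>1 \<chi>2 \<chi>3" "g \<in> carrier G" "\<chi>1 g = 1" "\<chi>2 g = 1"
  shows "g = \<one>\<^bsub>G\<^esub>"
  using assms by (auto simp: faithful_diagonal_SL3_def)

lemma exists_power_ne_one_and_power_mult_ne_one:
  fixes A B :: "'a::field"
  assumes "A \<noteq> 1" "B \<noteq> 1" "A ^ 2 \<noteq> 1 \<or> B ^ 2 \<noteq> 1"
  shows "\<exists>a::nat. A ^ a \<noteq> 1 \<and> A ^ a * B \<noteq> 1"
proof (cases "A * B = 1")
  case False
  then show ?thesis using assms(1) by (intro exI[of _ 1]) simp
next
  case True
  then have "A ^ 2 * B = A" by (simp add: power2_eq_square)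
  moreover have "A ^ 2 \<noteq> 1"
  proof
    assume "A ^ 2 = 1"
    then have "B = A" using True by (metis mult.left_commute mult_1_right power2_eq_square)
    then show False using assms(3) \<open>A ^ 2 = 1\<close> by simp
  qed
  ultimately show ?thesis using assms(1) by (intro exI[of _ 2]) simp
qed

lemma (in monoid) faithful_diagonal_SL3_twist_off_kernels:
  assumes emb: "faithful_diagonal_SL3 G \<chi>1 \<chi>2 \<chi>3"
    and g1: "g1 \<in> carrier G" and g2: "g2 \<in> carrier G"
    and "\<chi>1 g1 \<noteq> 1" "\<chi>1 g2 = 1" "\<chi>2 g1 = 1" "\<chi>2 g2 \<noteq> 1"
    and not_exponent_2: "g1 [^] (2::nat) \<noteq> \<one> \<or> g2 [^] (2::nat) \<noteq> \<one>"
  shows "\<exists>a::nat. \<forall>\<chi>\<in>{\<chi>1, \<chi>2, \<chi>3}. \<chi> (g1 [^] a \<otimes> g2) \<noteq> 1"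
proof -
  have \<chi>1: "character G \<chi>1" and \<chi>2: "character G \<chi>2"
    and det: "\<forall>g\<in>carrier G. \<chi>1 g * \<chi>2 g * \<chi>3 g = 1"
    using emb by (simp_all add: faithful_diagonal_SL3_def)
  define A B where "A = \<chi>1 g1" and "B = \<chi>2 g2"
  have at_twist: "\<chi>1 (g1 [^] a \<otimes> g2) = A ^ a" "\<chi>2 (g1 [^] a \<otimes> g2) = B" for a :: nat
    using assms \<chi>1 \<chi>2 by (simp_all add: character_def character_nat_pow A_def B_def)
  have "A ^ 2 \<noteq> 1 \<or> B ^ 2 \<noteq> 1"
  proof (rule ccontr)
    assume "\<not> (A ^ 2 \<noteq> 1 \<or> B ^ 2 \<noteq> 1)"
    then have "g1 [^] (2::nat) = \<one>" "g2 [^] (2::nat) = \<one>"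
      using assms faithful_diagonal_SL3_kernel[OF emb] \<chi>1 \<chi>2
      by (simp_all add: character_nat_pow A_def B_def)
    then show False using not_exponent_2 by simp
  qed
  then obtain a where "A ^ a \<noteq> 1" "A ^ a * B \<noteq> 1"
    using exists_power_ne_one_and_power_mult_ne_one assms(4,7) A_def B_def by blast
  moreover have "\<chi>3 (g1 [^] a \<otimes> g2) \<noteq> 1"
    using det g1 g2 at_twist \<open>A ^ a * B \<noteq> 1\<close> by (metis m_closed mult_1_right nat_pow_closed)
  ultimately show ?thesis using at_twist assms(7) B_def by auto
qed

lemma (in group) faithful_diagonal_SL3_generator_off_kernels:
  assumes emb: "faithful_diagonal_SL3 G \<chi>1 \<chi>2 \<chi>3"
    and g1: "g1 \<in> carrier G" and g2: "g2 \<in> carrier G"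
    and span: "generate G {g1} <#> generate G {g2} = carrier G"
    and nontrivial: "\<forall>\<chi>\<in>{\<chi>1, \<chi>2, \<chi>3}. \<not> trivial_on \<chi> (carrier G)"
    and not_exponent_2: "g1 [^] (2::nat) \<noteq> \<one> \<or> g2 [^] (2::nat) \<noteq> \<one>"
  shows "(\<forall>\<chi>\<in>{\<chi>1, \<chi>2, \<chi>3}. \<chi> g1 \<noteq> 1)
    \<or> (\<exists>a::nat. \<forall>\<chi>\<in>{\<chi>1, \<chi>2, \<chi>3}. \<chi> (g1 [^] a \<otimes> g2) \<noteq> 1)"
proof -
  have on_generators: "\<chi> g1 \<noteq> 1 \<or> \<chi> g2 \<noteq> 1" if "\<chi> \<in> {\<chi>1, \<chi>2, \<chi>3}" for \<chi>
    using that nontrivial trivial_on_set_mult_generate[OF _ g1 g2] span emb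
    by (auto simp: faithful_diagonal_SL3_def)
  have twist: "\<exists>a::nat. \<forall>\<chi>\<in>{\<chi>1, \<chi>2, \<chi>3}. \<chi> (g1 [^] a \<otimes> g2) \<noteq> 1"
    if "faithful_diagonal_SL3 G \<psi>1 \<psi>2 \<psi>3" "{\<psi>1, \<psi>2, \<psi>3} = {\<chi>1, \<chi>2, \<chi>3}"
      "\<psi>1 g2 = 1" "\<psi>2 g1 = 1" for \<psi>1 \<psi>2 \<psi>3
  proof -
    have "\<psi>1 g1 \<noteq> 1" "\<psi>2 g2 \<noteq> 1"
      using on_generators that(2-4) by blast+
    then show ?thesis
      using faithful_diagonal_SL3_twist_off_kernels[OF that(1) g1 g2 _ that(3,4) _ not_exponent_2] that(2)
      by metis
  qed
  note swap = faithful_diagonal_SL3_swap and rotate = faithful_diagonal_SL3_rotate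
  \<comment> \<open>\<open>a = 0\<close> settles the second case; the other six are \<open>twist\<close> for the six orderings of
    the characters.\<close>
  consider "\<forall>\<chi>\<in>{\<chi>1, \<chi>2, \<chi>3}. \<chi> g1 \<noteq> 1" | "\<forall>\<chi>\<in>{\<chi>1, \<chi>2, \<chi>3}. \<chi> g2 \<noteq> 1"
    | "\<chi>1 g2 = 1" "\<chi>2 g1 = 1" | "\<chi>2 g2 = 1" "\<chi>1 g1 = 1" | "\<chi>2 g2 = 1" "\<chi>3 g1 = 1"
    | "\<chi>3 g2 = 1" "\<chi>2 g1 = 1" | "\<chi>3 g2 = 1" "\<chi>1 g1 = 1" | "\<chi>1 g2 = 1" "\<chi>3 g1 = 1"
    using on_generators by blast
  then show ?thesis
    using g2 twist[OF emb] twist[OF swap[OF emb]] twist[OF rotate[OF emb]]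
      twist[OF swap[OF rotate[OF emb]]] twist[OF rotate[OF rotate[OF emb]]]
      twist[OF swap[OF rotate[OF rotate[OF emb]]]]
    by cases (auto simp: insert_commute intro: exI[of _ 0])
qed

lemma (in comm_group) faithful_diagonal_SL3_nontrivial_cyclic_factor:
  assumes emb: "faithful_diagonal_SL3 G \<chi>1 \<chi>2 \<chi>3"
    and g1: "g1 \<in> carrier G" and g2: "g2 \<in> carrier G"
    and disjoint: "generate G {g1} \<inter> generate G {g2} = {\<one>}"
    and span: "generate G {g1} <#> generate G {g2} = carrier G"
    and ord_dvd: "ord g1 dvd ord g2"
    and nontrivial: "\<forall>\<chi>\<in>{\<chi>1, \<chi>2, \<chi>3}. \<not> trivial_on \<chi> (carrier G)"
    and not_exponent_2: "g1 [^] (2::nat) \<noteq> \<one> \<or> g2 [^] (2::nat) \<noteq> \<one>"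
  shows "\<exists>H K. subgroup H G \<and> subgroup K G \<and> H \<inter> K = {\<one>} \<and> H <#> K = carrier G
    \<and> cyclic_group (subgroup_generated G H) \<and> (\<forall>\<chi>\<in>{\<chi>1, \<chi>2, \<chi>3}. \<not> trivial_on \<chi> H)"
proof -
  have factor: ?thesis
    if h: "h \<in> carrier G" and "\<forall>\<chi>\<in>{\<chi>1, \<chi>2, \<chi>3}. \<chi> h \<noteq> 1"
      and "subgroup K G" "generate G {h} \<inter> K = {\<one>}" "generate G {h} <#> K = carrier G" for h K
  proof -
    have "\<forall>\<chi>\<in>{\<chi>1, \<chi>2, \<chi>3}. \<not> trivial_on \<chi> (generate G {h})"
      using that(2) generate.incl[of h "{h}" G] by (auto simp: trivial_on_def)
    then show ?thesis
      using that h generate_is_subgroup[of "{h}"] cyclic_group_generate[OF h] by blast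
  qed
  from faithful_diagonal_SL3_generator_off_kernels[OF emb g1 g2 span nontrivial not_exponent_2]
  show ?thesis
  proof
    assume "\<forall>\<chi>\<in>{\<chi>1, \<chi>2, \<chi>3}. \<chi> g1 \<noteq> 1"
    then show ?thesis
      using factor[OF g1 _ generate_is_subgroup disjoint span] g2 by simp
  next
    assume "\<exists>a::nat. \<forall>\<chi>\<in>{\<chi>1, \<chi>2, \<chi>3}. \<chi> (g1 [^] a \<otimes> g2) \<noteq> 1"
    then obtain a :: nat where "\<forall>\<chi>\<in>{\<chi>1, \<chi>2, \<chi>3}. \<chi> (g1 [^] int a \<otimes> g2) \<noteq> 1"
      using g1 by (auto simp: int_pow_int)
    then show ?thesis
      using factor[OF _ _ generate_is_subgroup generate_twisted_complement[OF g1 g2 disjoint span ord_dvd]]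
        g1 g2 by simp
  qed
qed

theorem lemma3p6:
  fixes G :: "('g, 'b) monoid_scheme"
    and \<chi>1 \<chi>2 \<chi>3 :: "'g \<Rightarrow> 'k::field_char_0"
    and m l :: nat
  assumes "alg_closed_type TYPE('k)"
    and "comm_group G"
    and "m > 0" and "l > 0"
    and "G \<cong> DirProd (integer_mod_group m) (integer_mod_group (l * m))"
    and "character G \<chi>1" and "character G \<chi>2" and "character G \<chi>3"
    and faithful: "\<forall>g\<in>carrier G. \<chi>1 g = 1 \<and> \<chi>2 g = 1 \<and> \<chi>3 g = 1 \<longrightarrow> g = \<one>\<^bsub>G\<^esub>"
    and SL: "\<forall>g\<in>carrier G. \<chi>1 g * \<chi>2 g * \<chi>3 g = 1"
    and "\<not> trivial_on \<chi>1 (carrier G)" and "\<not> trivial_on \<chi>2 (carrier G)"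
    and "\<not> trivial_on \<chi>3 (carrier G)"
    and "card (carrier G) > 4"
  shows "\<exists>H K. subgroup H G \<and> subgroup K G \<and> H \<inter> K = {\<one>\<^bsub>G\<^esub>}
           \<and> H <#>\<^bsub>G\<^esub> K = carrier G
           \<and> cyclic_group (subgroup_generated G H)
           \<and> \<not> trivial_on \<chi>1 H \<and> \<not> trivial_on \<chi>2 H \<and> \<not> trivial_on \<chi>3 H"
proof -
  interpret comm_group G by fact
  obtain g1 g2 where g1: "g1 \<in> carrier G" and g2: "g2 \<in> carrier G"
    and ord: "ord g1 = m" "ord g2 = l * m"
    and disjoint: "generate G {g1} \<inter> generate G {g2} = {\<one>\<^bsub>G\<^esub>}"
    and span: "generate G {g1} <#>\<^bsub>G\<^esub> generate G {g2} = carrier G"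
    using iso_DirProd_integer_mod_group_generators[OF assms(5)] by blast
  have card: "card (carrier G) = m * (l * m)"
    using iso_same_card[OF assms(5)] assms(3,4)
    by (simp add: carrier_integer_mod_group card_cartesian_product flip: of_nat_mult)
  have not_exponent_2: "g1 [^]\<^bsub>G\<^esub> (2::nat) \<noteq> \<one>\<^bsub>G\<^esub> \<or> g2 [^]\<^bsub>G\<^esub> (2::nat) \<noteq> \<one>\<^bsub>G\<^esub>"
  proof (rule ccontr)
    assume "\<not> ?thesis"
    then have "m dvd 2" "l * m dvd 2"
      using pow_eq_id[OF g1] pow_eq_id[OF g2] ord by auto
    then have "m * (l * m) \<le> 2 * 2"
      by (intro mult_le_mono dvd_imp_le) auto
    then show False using card assms(14) by simp
  qed
  have emb: "faithful_diagonal_SL3 G \<chi>1 \<chi>2 \<chi>3"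
    using assms(6-8) faithful SL by (simp add: faithful_diagonal_SL3_def)
  have "ord g1 dvd ord g2"
    using ord by simp
  from faithful_diagonal_SL3_nontrivial_cyclic_factor[OF emb g1 g2 disjoint span this _ not_exponent_2]
  show ?thesis
    using assms(11-13) by simp
qed

end
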